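(* Let $\mathbf{X},\mathbf{Y}$ be sgrms over $\mathbb{R}^d$ on $[0,T]$. A map $\mathbf{Z}:[0,T]^2\to G(\mathbb{R}^d)$ coincides with $\mathbf{X}\boxplus\mathbf{Y}$ if and only if $\mathbf{Z}_{s,t}=\mathbf{Z}_{s,u}\otimes\mathbf{Z}_{u,t}$ for all $s,u,t\in[0,T]$ and, for every $s\in[0,T]$, $$\mathbf{Z}_{s,t}=\mathbf{X}_{s,t}\otimes\mathbf{Y}_{s,t}+R_{s,t}$$ for some $R_{s,t}\in T((\mathbb{R}^d))$ with $\langle R_{s,t},x\rangle=o(|t-s|)$ as $t\to s$ for all $x\in T(\mathbb{R}^d)$. Moreover, $$\mathbf{X}_{s,t}\otimes\mathbf{Y}_{s,t}=\mathbf{Y}_{s,t}\otimes\mathbf{X}_{s,t}+r_{s,t}=\mathbf{X}_{s,t}+\mathbf{Y}_{s,t}-\mathbf{1}+r'_{s,t}$$ for some $r_{s,t},r'_{s,t}\in T((\mathbb{R}^d))$ with $\langle r_{s,t},x\rangle,\langle r'_{s,t},x\rangle=o(|t-s|)$ as $t\to s$ for all $x\in T(\mathbb{R}^d)$.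
   Context: Fix $T>0$, $d\ge1$. $T((\mathbb{R}^d))$: formal tensor series $\sum_w\mathbf{x}^we_w$ over words in $\{1,\dots,d\}$ (incl. empty word, whose basis element $\mathbf{1}$ is the unit) with concatenation product $\otimes$; $T(\mathbb{R}^d)$ the polynomials; $\langle\mathbf{x},w\rangle=\mathbf{x}^w$, extended linearly. Shuffle product: bilinear, unit $\mathbf{1}$, $wi\sqcup\!\sqcup vj=(w\sqcup\!\sqcup vj)i+(wi\sqcup\!\sqcup v)j$. $G(\mathbb{R}^d)=\{\mathbf{x}:\langle\mathbf{x},\mathbf{1}\rangle=1,\ \langle\mathbf{x},v\sqcup\!\sqcup w\rangle=\langle\mathbf{x},v\rangle\langle\mathbf{x},w\rangle\ \forall v,w\}$, a group under $\otimes$; $\mathcal{L}((\mathbb{R}^d))$ the Lie series. An sgrm is a non-zero map $\mathbf{X}:[0,T]^2\to T((\mathbb{R}^d))$ with $\langle\mathbf{X}_{s,t},v\sqcup\!\sqcup w\rangle=\langle\mathbf{X}_{s,t},v\rangle\langle\mathbf{X}_{s,t},w\rangle$ for all words, $\mathbf{X}_{s,u}\otimes\mathbf{X}_{u,t}=\mathbf{X}_{s,t}$, and $t\mapsto\langle\mathbf{X}_{s,t},w\rangle$ smooth for all words $w$ and all $s$. Diagonal derivative $\dot{\mathbf{X}}_{s,s}=\partial_t|_{t=s}\mathbf{X}_{s,t}$ (a smooth $\mathcal{L}((\mathbb{R}^d))$-valued path). The canonical sum $\mathbf{X}\boxplus\mathbf{Y}$ of sgrms $\mathbf{X},\mathbf{Y}$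 is the sgrm $(s,t)\mapsto\mathbf{Z}_s^{-1}\otimes\mathbf{Z}_t$, where $\mathbf{Z}$ is the unique solution in $T((\mathbb{R}^d))$ (solved coordinatewise) of $\dot{\mathbf{Z}}_t=\mathbf{Z}_t\otimes(\dot{\mathbf{X}}_{t,t}+\dot{\mathbf{Y}}_{t,t})$, $\mathbf{Z}_0=\mathbf{1}$. *)

theory Defs
  imports "HOL-Analysis.Analysis" "HOL-Library.Landau_Symbols"
begin

text \<open>Words over the alphabet 'd (a finite type with CARD('d) = d letters);
tensor series are arbitrary coefficient functions on words.\<close>

type_synonym 'd tensor = "'d list \<Rightarrow> real"

definition wrd :: "'d list \<Rightarrow> 'd tensor" where
  "wrd w = (\<lambda>u. if u = w then 1 else 0)"

definition tone :: "'d tensor" where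
  "tone = wrd []"

definition tmul :: "'d tensor \<Rightarrow> 'd tensor \<Rightarrow> 'd tensor" where
  "tmul x y = (\<lambda>w. \<Sum>i\<le>length w. x (take i w) * y (drop i w))"

definition tadd :: "'d tensor \<Rightarrow> 'd tensor \<Rightarrow> 'd tensor" where
  "tadd x y = (\<lambda>w. x w + y w)"

definition tsub :: "'d tensor \<Rightarrow> 'd tensor \<Rightarrow> 'd tensor" where
  "tsub x y = (\<lambda>w. x w - y w)"

definition tpoly :: "'d tensor \<Rightarrow> bool" where
  "tpoly p \<longleftrightarrow> finite {w. p w \<noteq> 0}"

definition pair :: "'d tensor \<Rightarrow> 'd tensor \<Rightarrow> real" where
  "pair x p = (\<Sum>w\<in>{w. p w \<noteq> 0}. x w * p w)"

text \<open>Shuffle product of words, via the recursion on last letters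
  wi sh vj = (w sh vj)i + (wi sh v)j.  shuffle_rev works on reversed words.\<close>
fun shuffle_rev :: "'d list \<Rightarrow> 'd list \<Rightarrow> 'd tensor" where
  "shuffle_rev [] v = wrd v"
| "shuffle_rev (i#w) [] = wrd (i#w)"
| "shuffle_rev (i#w) (j#v) = (\<lambda>u. case u of [] \<Rightarrow> 0
      | k#u' \<Rightarrow> (if k = i then shuffle_rev w (j#v) u' else 0)
              + (if k = j then shuffle_rev (i#w) v u' else 0))"

definition shuffle :: "'d list \<Rightarrow> 'd list \<Rightarrow> 'd tensor" where
  "shuffle w v = (\<lambda>u. shuffle_rev (rev w) (rev v) (rev u))"

definition grouplike :: "'d tensor \<Rightarrow> bool" where
  "grouplike x \<longleftrightarrow> pair x tone = 1 \<and>
     (\<forall>v w. pair x (shuffle v w) = pair x (wrd v) * pair x (wrd w))"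

definition smooth_on_int :: "real \<Rightarrow> (real \<Rightarrow> real) \<Rightarrow> bool" where
  "smooth_on_int T f \<longleftrightarrow> (\<exists>g :: nat \<Rightarrow> real \<Rightarrow> real. g 0 = f \<and>
     (\<forall>n. \<forall>t\<in>{0..T}. (g n has_real_derivative g (Suc n) t) (at t within {0..T})))"

definition sgrm :: "real \<Rightarrow> (real \<Rightarrow> real \<Rightarrow> 'd tensor) \<Rightarrow> bool" where
  "sgrm T X \<longleftrightarrow>
     (\<exists>s\<in>{0..T}. \<exists>t\<in>{0..T}. X s t \<noteq> (\<lambda>_. 0)) \<and>
     (\<forall>s\<in>{0..T}. \<forall>t\<in>{0..T}. \<forall>v w.
        pair (X s t) (shuffle v w) = pair (X s t) (wrd v) * pair (X s t) (wrd w)) \<and>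
     (\<forall>s\<in>{0..T}. \<forall>u\<in>{0..T}. \<forall>t\<in>{0..T}. tmul (X s u) (X u t) = X s t) \<and>
     (\<forall>s\<in>{0..T}. \<forall>w. smooth_on_int T (\<lambda>t. X s t w))"

definition diagder :: "real \<Rightarrow> (real \<Rightarrow> real \<Rightarrow> 'd tensor) \<Rightarrow> real \<Rightarrow> 'd tensor" where
  "diagder T X s = (\<lambda>w. vector_derivative (\<lambda>t. X s t w) (at s within {0..T}))"

definition tinv :: "'d tensor \<Rightarrow> 'd tensor" where
  "tinv x = (THE y. tmul x y = tone \<and> tmul y x = tone)"

text \<open>(values outside [0,T] normalised to 1 so THE is unique) the path Z solving dZ_t = Z_t (Xdot_tt + Ydot_tt), Z_0 = 1\<close>
definition csum_path :: "real \<Rightarrow> (real \<Rightarrow> real \<Rightarrow> 'd tensor) \<Rightarrow> (real \<Rightarrow> real \<Rightarrow> 'd tensor)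
    \<Rightarrow> real \<Rightarrow> 'd tensor" where
  "csum_path T X Y = (THE Z. Z 0 = tone \<and> (\<forall>r. r \<notin> {0..T} \<longrightarrow> Z r = tone) \<and> (\<forall>t\<in>{0..T}. \<forall>w.
      ((\<lambda>r. Z r w) has_real_derivative
          tmul (Z t) (tadd (diagder T X t) (diagder T Y t)) w) (at t within {0..T})))"

definition csum :: "real \<Rightarrow> (real \<Rightarrow> real \<Rightarrow> 'd tensor) \<Rightarrow> (real \<Rightarrow> real \<Rightarrow> 'd tensor)
    \<Rightarrow> real \<Rightarrow> real \<Rightarrow> 'd tensor" where
  "csum T X Y s t = tmul (tinv (csum_path T X Y s)) (csum_path T X Y t)"

end

theory Submission
  imports Defs
begin

(* A two-parameter family Z with Chen's relation and Z t t = 1 is determined by its diagonal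
   derivative D t = d/dr Z t r at r = t: the path Z 0 solves dW = W \<otimes> D, an equation that is
   triangular in the word length and so has unique solutions, and Z s t = (Z 0 s)\<^sup>-\<^sup>1 \<otimes> Z 0 t.
   For two families that agree at t = s, having the same derivative there is the same as
   differing by o(|t - s|) in every coordinate.  The canonical sum, X s t \<otimes> Y s t,
   Y s t \<otimes> X s t and X s t + Y s t - 1 all equal 1 at t = s and have derivative
   Xdot s s + Ydot s s there. *)

section \<open>The algebra of tensor series\<close>

lemma tadd_tsub_cancel: "tadd y (tsub x y) = x"
  by (simp add: tadd_def tsub_def)

lemma tone_simps [simp]: "tone [] = 1" "tone (a # w) = 0"
  by (auto simp: tone_def wrd_def)

lemma tmul_Nil [simp]: "tmul x y [] = x [] * y []"
  by (simp add: tmul_def)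

lemma tmul_Cons: "tmul x y (a # w) = x [] * y (a # w) + tmul (\<lambda>u. x (a # u)) y w"
  unfolding tmul_def by (simp add: sum.atMost_Suc_shift del: sum.atMost_Suc)

lemma tmul_split_last: "tmul x y w = (\<Sum>i<length w. x (take i w) * y (drop i w)) + x w * y []"
  unfolding tmul_def by (simp add: lessThan_Suc_atMost[symmetric])

lemma tmul_zero_left [simp]: "tmul (\<lambda>_. 0) y = (\<lambda>_. 0)"
  by (simp add: tmul_def)

lemma tmul_linear_left: "tmul (\<lambda>u. c * f u + g u) y w = c * tmul f y w + tmul g y w"
  by (simp add: tmul_def algebra_simps sum.distrib sum_distrib_left)

lemma tmul_assoc: "tmul (tmul x y) z = tmul x (tmul y z)"
proof
  fix w show "tmul (tmul x y) z w = tmul x (tmul y z) w"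
  proof (induction w arbitrary: x y)
    case Nil
    then show ?case by simp
  next
    case (Cons a w)
    have "tmul (tmul x y) z (a # w)
        = x [] * y [] * z (a # w) + tmul (\<lambda>u. x [] * y (a # u) + tmul (\<lambda>u. x (a # u)) y u) z w"
      by (simp add: tmul_Cons)
    also have "\<dots> = x [] * y [] * z (a # w) + x [] * tmul (\<lambda>u. y (a # u)) z w
                    + tmul (tmul (\<lambda>u. x (a # u)) y) z w"
      by (simp add: tmul_linear_left)
    also have "\<dots> = tmul x (tmul y z) (a # w)"
      using Cons.IH by (simp add: tmul_Cons algebra_simps)
    finally show ?case .
  qed
qed

lemma tmul_tone_left [simp]: "tmul tone x = x"
proof
  fix w show "tmul tone x w = x w"
    by (cases w) (simp_all add: tmul_Cons)
qed

lemma tmul_tone_right [simp]: "tmul x tone = x"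
proof
  fix w show "tmul x tone w = x w"
    by (induction w arbitrary: x) (simp_all add: tmul_Cons)
qed

lemma left_inverse_eq_right_inverse: "tmul y x = tone \<Longrightarrow> tmul x z = tone \<Longrightarrow> y = z"
  by (metis tmul_assoc tmul_tone_left tmul_tone_right)

(* Solves tmul y x = tone for y word by word, assuming x [] = 1. *)
function tinv_rec :: "'d tensor \<Rightarrow> 'd list \<Rightarrow> real" where
  "tinv_rec x w =
     (if w = [] then 1 else - (\<Sum>i<length w. tinv_rec x (take i w) * x (drop i w)))"
  by auto
termination
  by (relation "Wellfounded.measure (\<lambda>(x, w). length w)") auto

declare tinv_rec.simps [simp del]

lemma tinv_rec_Nil [simp]: "tinv_rec x [] = 1"
  by (simp add: tinv_rec.simps)

lemma tmul_tinv_rec_left: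
  assumes "x [] = 1"
  shows "tmul (tinv_rec x) x = tone"
proof
  fix w show "tmul (tinv_rec x) x w = tone w"
  proof (cases w)
    case (Cons a v)
    have "tmul (tinv_rec x) x w
        = (\<Sum>i<length w. tinv_rec x (take i w) * x (drop i w)) + tinv_rec x w"
      using assms by (simp add: tmul_split_last)
    also have "\<dots> = 0"
      using Cons by (subst (2) tinv_rec.simps) simp
    finally show ?thesis
      using Cons by simp
  qed (simp add: assms)
qed

lemma tinv_rec_inverse:
  assumes "x [] = 1"
  shows "tmul (tinv_rec x) x = tone" "tmul x (tinv_rec x) = tone"
proof -
  show left: "tmul (tinv_rec x) x = tone"
    using tmul_tinv_rec_left assms .
  have "tmul (tinv_rec (tinv_rec x)) (tinv_rec x) = tone"
    by (simp add: tmul_tinv_rec_left)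
  moreover from this have "tinv_rec (tinv_rec x) = x"
    using left left_inverse_eq_right_inverse by blast
  ultimately show "tmul x (tinv_rec x) = tone"
    by simp
qed

lemma tinv_eqI: "tmul x y = tone \<Longrightarrow> tmul y x = tone \<Longrightarrow> tinv x = y"
  unfolding tinv_def by (rule the_equality) (auto dest: left_inverse_eq_right_inverse)

lemma tinv_eq_tinv_rec: "x [] = 1 \<Longrightarrow> tinv x = tinv_rec x"
  by (simp add: tinv_eqI tinv_rec_inverse)

lemma tinv_inverse:
  assumes "x [] = 1"
  shows "tmul (tinv x) x = tone" "tmul x (tinv x) = tone"
  using tinv_rec_inverse assms by (simp_all add: tinv_eq_tinv_rec)

lemma tinv_eq_left_inverse: "x [] = 1 \<Longrightarrow> tmul y x = tone \<Longrightarrow> tinv x = y"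
  by (metis left_inverse_eq_right_inverse tinv_inverse(2))

lemma tmul_idem_eq_tone: "x [] = 1 \<Longrightarrow> tmul x x = x \<Longrightarrow> x = tone"
  by (metis tinv_inverse(1) tmul_assoc tmul_tone_left)

lemma pair_wrd [simp]: "pair x (wrd w) = x w"
proof -
  have "{u. wrd w u \<noteq> 0} = {w}"
    by (auto simp: wrd_def)
  then show ?thesis
    by (simp add: pair_def wrd_def)
qed

lemma tpoly_wrd: "tpoly (wrd w)"
proof -
  have "{u. wrd w u \<noteq> 0} = {w}"
    by (auto simp: wrd_def)
  then show ?thesis
    by (simp add: tpoly_def)
qed

lemma pair_smallo:
  assumes "tpoly p" "\<And>w. (\<lambda>t. x t w) \<in> o[F](g)"
  shows "(\<lambda>t. pair (x t) p) \<in> o[F](g)"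
  unfolding pair_def using assms(2) by (intro big_sum_in_smallo) simp

lemma grouplike_Nil: "grouplike x \<Longrightarrow> x [] = 1"
  by (simp add: grouplike_def tone_def)

section \<open>Calculus of coordinatewise tensor-valued functions\<close>

lemma continuous_on_tmul:
  assumes "\<And>u. continuous_on S (\<lambda>t. x t u)" "\<And>u. continuous_on S (\<lambda>t. y t u)"
  shows "continuous_on S (\<lambda>t. tmul (x t) (y t) w)"
  unfolding tmul_def by (intro continuous_intros assms)

lemma continuous_on_tinv_rec:
  assumes "\<And>u. continuous_on S (\<lambda>t. x t u)"
  shows "continuous_on S (\<lambda>t. tinv_rec (x t) w)"
proof (induction "length w" arbitrary: w rule: less_induct)
  case less
  show ?case
  proof (cases "w = []")
    case False
    have "continuous_on S (\<lambda>t. - (\<Sum>i<length w. tinv_rec (x t) (take i w) * x t (drop i w)))"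
      by (intro continuous_intros less assms) auto
    with False show ?thesis
      by (subst tinv_rec.simps) simp
  qed simp
qed

lemma continuous_on_tinv:
  assumes "\<And>u. continuous_on S (\<lambda>t. x t u)" "\<And>t. t \<in> S \<Longrightarrow> x t [] = 1"
  shows "continuous_on S (\<lambda>t. tinv (x t) w)"
  using continuous_on_tinv_rec[OF assms(1)]
  by (rule continuous_on_eq) (simp add: assms(2) tinv_eq_tinv_rec)

lemma has_real_derivative_tmul:
  assumes "\<And>u. ((\<lambda>t. x t u) has_real_derivative x' u) (at s within S)"
    and "\<And>u. ((\<lambda>t. y t u) has_real_derivative y' u) (at s within S)"
  shows "((\<lambda>t. tmul (x t) (y t) w) has_real_derivative tmul x' (y s) w + tmul (x s) y' w)
           (at s within S)"
  unfolding tmul_def sum.distrib[symmetric]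
proof (rule DERIV_sum)
  fix i
  show "((\<lambda>t. x t (take i w) * y t (drop i w)) has_real_derivative
          x' (take i w) * y s (drop i w) + x s (take i w) * y' (drop i w)) (at s within S)"
    using DERIV_mult'[OF assms(1) assms(2)] by (simp add: add.commute)
qed

lemma has_real_derivative_tmul_const_left:
  assumes "\<And>u. ((\<lambda>t. y t u) has_real_derivative y' u) (at s within S)"
  shows "((\<lambda>t. tmul c (y t) w) has_real_derivative tmul c y' w) (at s within S)"
  using has_real_derivative_tmul[where x = "\<lambda>_. c", OF DERIV_const assms] by simp

lemma vector_derivative_interval_eq:
  "a < b \<Longrightarrow> t \<in> {a..b} \<Longrightarrow> (f has_real_derivative D) (at t within {a..b})
    \<Longrightarrow> vector_derivative f (at t within {a..b}) = D"
  by (rule vector_derivative_within_closed_interval)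
     (auto simp: has_real_derivative_iff_has_vector_derivative)

lemma eq_if_same_derivative_on_interval:
  fixes f g :: "real \<Rightarrow> real"
  assumes "\<And>t. t \<in> {a..b} \<Longrightarrow> (f has_real_derivative D t) (at t within {a..b})"
    and "\<And>t. t \<in> {a..b} \<Longrightarrow> (g has_real_derivative D t) (at t within {a..b})"
    and "f a = g a" "t \<in> {a..b}"
  shows "f t = g t"
proof -
  have "((\<lambda>t. f t - g t) has_real_derivative 0) (at t within {a..b})" if "t \<in> {a..b}" for t
    using DERIV_diff[OF assms(1,2)[OF that]] by simp
  then obtain c where c: "\<forall>t\<in>{a..b}. f t - g t = c"
    using has_field_derivative_zero_constant[of "{a..b}"] by blast
  have "a \<in> {a..b}"
    using assms(4) by simp
  with c assms(4) have "f t - g t = c" "f a - g a = c"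
    by auto
  with assms(3) show ?thesis
    by simp
qed

lemma smallo_abs_diff_iff_has_derivative_zero:
  fixes f :: "real \<Rightarrow> real"
  assumes "f s = 0"
  shows "f \<in> o[at s within S](\<lambda>t. \<bar>t - s\<bar>) \<longleftrightarrow> (f has_real_derivative 0) (at s within S)"
proof -
  have "eventually (\<lambda>t. \<bar>t - s\<bar> \<noteq> 0) (at s within S)"
    by (simp add: eventually_at_filter)
  then have "f \<in> o[at s within S](\<lambda>t. \<bar>t - s\<bar>) \<longleftrightarrow> ((\<lambda>t. f t / \<bar>t - s\<bar>) \<longlongrightarrow> 0) (at s within S)"
    by (blast intro: smalloI_tendsto dest: smalloD_tendsto)
  also have "\<dots> \<longleftrightarrow> ((\<lambda>t. f t / (t - s)) \<longlongrightarrow> 0) (at s within S)"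
    by (subst (1 2) tendsto_rabs_zero_iff[symmetric]) (simp add: abs_divide)
  also have "\<dots> \<longleftrightarrow> (f has_real_derivative 0) (at s within S)"
    using assms by (simp add: has_field_derivative_iff)
  finally show ?thesis .
qed

lemma expansion_if_same_derivative:
  fixes x y :: "real \<Rightarrow> 'd tensor"
  assumes "x s = y s"
    and "\<And>w. ((\<lambda>t. x t w) has_real_derivative D w) (at s within S)"
    and "\<And>w. ((\<lambda>t. y t w) has_real_derivative D w) (at s within S)"
  shows "\<exists>R. (\<forall>t\<in>S. x t = tadd (y t) (R t)) \<and>
             (\<forall>p. tpoly p \<longrightarrow> (\<lambda>t. pair (R t) p) \<in> o[at s within S](\<lambda>t. \<bar>t - s\<bar>))"
proof (intro exI[of _ "\<lambda>t. tsub (x t) (y t)"] conjI ballI allI impI)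
  show "x t = tadd (y t) (tsub (x t) (y t))" for t
    by (simp add: tadd_tsub_cancel)
  fix p :: "'d tensor" assume "tpoly p"
  then show "(\<lambda>t. pair (tsub (x t) (y t)) p) \<in> o[at s within S](\<lambda>t. \<bar>t - s\<bar>)"
  proof (rule pair_smallo)
    fix w
    have "((\<lambda>t. x t w - y t w) has_real_derivative 0) (at s within S)"
      using DERIV_diff[OF assms(2)[of w] assms(3)[of w]] by simp
    with assms(1) show "(\<lambda>t. tsub (x t) (y t) w) \<in> o[at s within S](\<lambda>t. \<bar>t - s\<bar>)"
      unfolding tsub_def by (intro smallo_abs_diff_iff_has_derivative_zero[THEN iffD2]) simp_all
  qed
qed

lemma has_derivative_if_expansion:
  assumes "\<forall>t\<in>S. x t = tadd (y t) (R t)"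
    and "\<forall>p. tpoly p \<longrightarrow> (\<lambda>t. pair (R t) p) \<in> o[at s within S](\<lambda>t. \<bar>t - s\<bar>)"
    and "s \<in> S" "x s = y s"
    and "((\<lambda>t. y t w) has_real_derivative D) (at s within S)"
  shows "((\<lambda>t. x t w) has_real_derivative D) (at s within S)"
proof -
  have "R s w = 0"
    using assms(1,3,4) by (metis add_cancel_right_right tadd_def)
  moreover have "(\<lambda>t. R t w) \<in> o[at s within S](\<lambda>t. \<bar>t - s\<bar>)"
    using assms(2)[rule_format, OF tpoly_wrd[of w]] by simp
  ultimately have "((\<lambda>t. R t w) has_real_derivative 0) (at s within S)"
    using smallo_abs_diff_iff_has_derivative_zero[of "\<lambda>t. R t w" s S] by blast
  from DERIV_add[OF assms(5) this]
  have "((\<lambda>t. y t w + R t w) has_real_derivative D) (at s within S)"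
    by simp
  then show ?thesis
    by (rule has_field_derivative_transform_within[where d = 1]) (use assms(1,3) in \<open>auto simp: tadd_def\<close>)
qed

section \<open>Smooth geometric rough paths\<close>

lemma shuffle_Nil_right: "shuffle v [] = wrd v"
proof
  fix u show "shuffle v [] u = wrd v u"
    by (cases "rev v") (auto simp: shuffle_def wrd_def)
qed

lemma sgrm_chen:
  "sgrm T X \<Longrightarrow> s \<in> {0..T} \<Longrightarrow> u \<in> {0..T} \<Longrightarrow> t \<in> {0..T} \<Longrightarrow> tmul (X s u) (X u t) = X s t"
  unfolding sgrm_def by blast

(* The shuffle relation for v = w = [] only gives X s t [] \<in> {0, 1}; a zero would spread
   through Chen's relation to all of [0,T]\<^sup>2, which the non-vanishing condition excludes. *)
lemma sgrm_Nil:
  assumes "sgrm T X" "s \<in> {0..T}" "t \<in> {0..T}"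
  shows "X s t [] = 1"
proof (rule ccontr)
  assume ne: "X s t [] \<noteq> 1"
  have shuffle: "pair (X s t) (shuffle v w) = pair (X s t) (wrd v) * pair (X s t) (wrd w)" for v w
    using assms unfolding sgrm_def by blast
  have "X s t [] = X s t [] * X s t []"
    using shuffle[of "[]" "[]"] by (simp add: shuffle_Nil_right)
  with ne have "X s t [] = 0"
    by (metis mult_cancel_right1)
  have zero: "X s t = (\<lambda>_. 0)"
  proof
    fix v show "X s t v = 0"
      using shuffle[of v "[]"] \<open>X s t [] = 0\<close> by (simp add: shuffle_Nil_right)
  qed
  have "X a b = (\<lambda>_. 0)" if "a \<in> {0..T}" "b \<in> {0..T}" for a b
  proof -
    have "X s b = (\<lambda>_. 0)"
      using sgrm_chen[OF assms(1) assms(2,3) that(2)] zero by simp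
    then show ?thesis
      using sgrm_chen[OF assms(1) that(1) assms(2) that(2)] by (simp add: tmul_def)
  qed
  moreover have "\<exists>a\<in>{0..T}. \<exists>b\<in>{0..T}. X a b \<noteq> (\<lambda>_. 0)"
    using assms(1) unfolding sgrm_def by (rule conjunct1)
  ultimately show False
    by blast
qed

lemma sgrm_diag: "sgrm T X \<Longrightarrow> s \<in> {0..T} \<Longrightarrow> X s s = tone"
  by (rule tmul_idem_eq_tone) (simp_all add: sgrm_Nil sgrm_chen)

lemma sgrm_has_derivative:
  assumes "sgrm T X" "T > 0" "s \<in> {0..T}"
  shows "\<And>t. t \<in> {0..T} \<Longrightarrow> ((\<lambda>r. X s r w) has_real_derivative
           vector_derivative (\<lambda>r. X s r w) (at t within {0..T})) (at t within {0..T})"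
    and "continuous_on {0..T} (\<lambda>t. vector_derivative (\<lambda>r. X s r w) (at t within {0..T}))"
proof -
  have "smooth_on_int T (\<lambda>t. X s t w)"
    using assms unfolding sgrm_def by blast
  then obtain g where g0: "g 0 = (\<lambda>t. X s t w)"
    and g: "\<And>n t. t \<in> {0..T} \<Longrightarrow> (g n has_real_derivative g (Suc n) t) (at t within {0..T})"
    unfolding smooth_on_int_def by blast
  have g1: "vector_derivative (\<lambda>r. X s r w) (at t within {0..T}) = g 1 t" if "t \<in> {0..T}" for t
    using g[of t 0] that g0 assms(2) by (intro vector_derivative_interval_eq) auto
  show "((\<lambda>r. X s r w) has_real_derivative
          vector_derivative (\<lambda>r. X s r w) (at t within {0..T})) (at t within {0..T})"
    if "t \<in> {0..T}" for t
    using g[of t 0] g0 g1 that by simp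
  have "continuous_on {0..T} (g 1)"
    using g[of _ 1] DERIV_continuous continuous_on_eq_continuous_within by blast
  then show "continuous_on {0..T} (\<lambda>t. vector_derivative (\<lambda>r. X s r w) (at t within {0..T}))"
    using g1 continuous_on_eq by force
qed

lemma sgrm_continuous_on:
  assumes "sgrm T X" "T > 0" "s \<in> {0..T}"
  shows "continuous_on {0..T} (\<lambda>t. X s t w)"
  using sgrm_has_derivative(1)[OF assms] DERIV_continuous continuous_on_eq_continuous_within
  by blast

lemma has_real_derivative_diagder:
  assumes "sgrm T X" "T > 0" "s \<in> {0..T}"
  shows "((\<lambda>t. X s t w) has_real_derivative diagder T X s w) (at s within {0..T})"
  using sgrm_has_derivative(1)[OF assms assms(3)] unfolding diagder_def .

lemma diagder_Nil:
  assumes "sgrm T X" "T > 0" "s \<in> {0..T}"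
  shows "diagder T X s [] = 0"
proof -
  have "((\<lambda>t. X s t []) has_real_derivative 0) (at s within {0..T})"
    using has_field_derivative_transform_within[OF DERIV_const[of 1] zero_less_one assms(3)]
    by (simp add: sgrm_Nil[OF assms(1,3)])
  with assms show ?thesis
    unfolding diagder_def by (intro vector_derivative_interval_eq) auto
qed

(* Smoothness is only assumed in the second variable; continuity in the base point comes from
   X t r = (X 0 t)\<^sup>-\<^sup>1 \<otimes> X 0 r. *)
lemma continuous_on_diagder:
  assumes "sgrm T X" "T > 0"
  shows "continuous_on {0..T} (\<lambda>t. diagder T X t w)"
proof -
  have zero: "0 \<in> {0..T}"
    using assms(2) by simp
  define D where "D t u = vector_derivative (\<lambda>r. X 0 r u) (at t within {0..T})" for t u
  have "diagder T X t w = tmul (tinv (X 0 t)) (D t) w" if t: "t \<in> {0..T}" for t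
  proof -
    have "tmul (X t 0) (X 0 t) = tone"
      using sgrm_chen[OF assms(1) t zero t] sgrm_diag[OF assms(1) t] by simp
    then have inv: "tinv (X 0 t) = X t 0"
      using tinv_eq_left_inverse sgrm_Nil[OF assms(1) zero t] by blast
    have "((\<lambda>r. tmul (X t 0) (X 0 r) w) has_real_derivative tmul (X t 0) (D t) w) (at t within {0..T})"
      using sgrm_has_derivative(1)[OF assms zero t] unfolding D_def
      by (rule has_real_derivative_tmul_const_left)
    then have "((\<lambda>r. X t r w) has_real_derivative tmul (X t 0) (D t) w) (at t within {0..T})"
      by (rule has_field_derivative_transform_within[where d = 1])
         (use t sgrm_chen[OF assms(1) t zero] in auto)
    with assms t inv show ?thesis
      unfolding diagder_def by (simp add: vector_derivative_interval_eq)
  qed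
  moreover have "continuous_on {0..T} (\<lambda>t. tmul (tinv (X 0 t)) (D t) w)"
    using sgrm_has_derivative(2)[OF assms zero] sgrm_Nil[OF assms(1) zero]
      sgrm_continuous_on[OF assms zero]
    unfolding D_def by (intro continuous_on_tmul continuous_on_tinv) auto
  ultimately show ?thesis
    using continuous_on_eq by force
qed

lemma has_real_derivative_tmul_sgrm:
  assumes "sgrm T X" "sgrm T Y" "T > 0" "s \<in> {0..T}"
  shows "((\<lambda>t. tmul (X s t) (Y s t) w) has_real_derivative tadd (diagder T X s) (diagder T Y s) w)
           (at s within {0..T})"
proof -
  have "((\<lambda>t. tmul (X s t) (Y s t) w) has_real_derivative
          tmul (diagder T X s) (Y s s) w + tmul (X s s) (diagder T Y s) w) (at s within {0..T})"
    by (intro has_real_derivative_tmul has_real_derivative_diagder assms)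
  then show ?thesis
    by (simp add: sgrm_diag[OF assms(1,4)] sgrm_diag[OF assms(2,4)] tadd_def)
qed

lemma tmul_sgrm_commute_expansion:
  assumes "sgrm T X" "sgrm T Y" "T > 0" "s \<in> {0..T}"
  shows "\<exists>r. (\<forall>t\<in>{0..T}. tmul (X s t) (Y s t) = tadd (tmul (Y s t) (X s t)) (r t)) \<and>
           (\<forall>p. tpoly p \<longrightarrow> (\<lambda>t. pair (r t) p) \<in> o[at s within {0..T}](\<lambda>t. \<bar>t - s\<bar>))"
proof (rule expansion_if_same_derivative[where D = "tadd (diagder T X s) (diagder T Y s)"])
  show "tmul (X s s) (Y s s) = tmul (Y s s) (X s s)"
    using assms by (simp add: sgrm_diag)
  show "((\<lambda>t. tmul (X s t) (Y s t) w) has_real_derivative tadd (diagder T X s) (diagder T Y s) w)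
          (at s within {0..T})" for w
    using has_real_derivative_tmul_sgrm[OF assms] .
  show "((\<lambda>t. tmul (Y s t) (X s t) w) has_real_derivative tadd (diagder T X s) (diagder T Y s) w)
          (at s within {0..T})" for w
    using has_real_derivative_tmul_sgrm[OF assms(2,1,3,4), of w] by (simp add: tadd_def add.commute)
qed

lemma tmul_sgrm_linear_expansion:
  assumes "sgrm T X" "sgrm T Y" "T > 0" "s \<in> {0..T}"
  shows "\<exists>r. (\<forall>t\<in>{0..T}. tmul (X s t) (Y s t) = tadd (tsub (tadd (X s t) (Y s t)) tone) (r t)) \<and>
           (\<forall>p. tpoly p \<longrightarrow> (\<lambda>t. pair (r t) p) \<in> o[at s within {0..T}](\<lambda>t. \<bar>t - s\<bar>))"
proof (rule expansion_if_same_derivative[where D = "tadd (diagder T X s) (diagder T Y s)"])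
  show "tmul (X s s) (Y s s) = tsub (tadd (X s s) (Y s s)) tone"
    using assms by (simp add: sgrm_diag fun_eq_iff tadd_def tsub_def)
  show "((\<lambda>t. tmul (X s t) (Y s t) w) has_real_derivative tadd (diagder T X s) (diagder T Y s) w)
          (at s within {0..T})" for w
    using has_real_derivative_tmul_sgrm[OF assms] .
  show "((\<lambda>t. tsub (tadd (X s t) (Y s t)) tone w) has_real_derivative tadd (diagder T X s) (diagder T Y s) w)
          (at s within {0..T})" for w
    using DERIV_diff[OF DERIV_add[OF has_real_derivative_diagder[OF assms(1,3,4), of w]
        has_real_derivative_diagder[OF assms(2,3,4), of w]] DERIV_const[of "tone w"]]
    by (simp add: tadd_def tsub_def)
qed

lemma tmul_sgrm_expansions:
  assumes "sgrm T X" "sgrm T Y" "T > 0" "s \<in> {0..T}"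
  shows "\<exists>r r'. (\<forall>t\<in>{0..T}. tmul (X s t) (Y s t) = tadd (tmul (Y s t) (X s t)) (r t) \<and>
             tmul (X s t) (Y s t) = tadd (tsub (tadd (X s t) (Y s t)) tone) (r' t)) \<and>
           (\<forall>p. tpoly p \<longrightarrow>
             (\<lambda>t. pair (r t) p) \<in> o[at s within {0..T}](\<lambda>t. \<bar>t - s\<bar>) \<and>
             (\<lambda>t. pair (r' t) p) \<in> o[at s within {0..T}](\<lambda>t. \<bar>t - s\<bar>))"
proof -
  obtain r where r: "\<forall>t\<in>{0..T}. tmul (X s t) (Y s t) = tadd (tmul (Y s t) (X s t)) (r t)"
    and r_smallo: "\<forall>p. tpoly p \<longrightarrow> (\<lambda>t. pair (r t) p) \<in> o[at s within {0..T}](\<lambda>t. \<bar>t - s\<bar>)"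
    using tmul_sgrm_commute_expansion[OF assms] by blast
  obtain r' where r': "\<forall>t\<in>{0..T}. tmul (X s t) (Y s t) = tadd (tsub (tadd (X s t) (Y s t)) tone) (r' t)"
    and r'_smallo: "\<forall>p. tpoly p \<longrightarrow> (\<lambda>t. pair (r' t) p) \<in> o[at s within {0..T}](\<lambda>t. \<bar>t - s\<bar>)"
    using tmul_sgrm_linear_expansion[OF assms] by blast
  show ?thesis
    using r r_smallo r' r'_smallo by (intro exI[of _ r] exI[of _ r']) simp
qed

section \<open>The linear equation dW = W \<otimes> A\<close>

definition solves_tensor_ode :: "real \<Rightarrow> (real \<Rightarrow> 'd tensor) \<Rightarrow> (real \<Rightarrow> 'd tensor) \<Rightarrow> bool" where
  "solves_tensor_ode T A W \<longleftrightarrow> W 0 = tone \<and>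
     (\<forall>t\<in>{0..T}. \<forall>w. ((\<lambda>r. W r w) has_real_derivative tmul (W t) (A t) w) (at t within {0..T}))"

lemma solves_tensor_ode_derivative:
  "solves_tensor_ode T A W \<Longrightarrow> t \<in> {0..T} \<Longrightarrow>
    ((\<lambda>r. W r w) has_real_derivative tmul (W t) (A t) w) (at t within {0..T})"
  unfolding solves_tensor_ode_def by blast

lemma solves_tensor_ode_Nil:
  assumes "solves_tensor_ode T A W" "\<And>t. t \<in> {0..T} \<Longrightarrow> A t [] = 0" "t \<in> {0..T}"
  shows "W t [] = 1"
proof (rule eq_if_same_derivative_on_interval[where f = "\<lambda>r. W r []" and g = "\<lambda>_. 1"
      and D = "\<lambda>_. 0" and a = 0 and b = T])
  show "((\<lambda>r. W r []) has_real_derivative 0) (at r within {0..T})" if "r \<in> {0..T}" for r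
    using solves_tensor_ode_derivative[OF assms(1) that, of "[]"] assms(2)[OF that] by simp
qed (use assms in \<open>simp_all add: solves_tensor_ode_def\<close>)

lemma solves_tensor_ode_unique:
  assumes "solves_tensor_ode T A V" "solves_tensor_ode T A W"
    and "\<And>t. t \<in> {0..T} \<Longrightarrow> A t [] = 0" "t \<in> {0..T}"
  shows "V t = W t"
proof
  fix w show "V t w = W t w"
    using assms(4)
  proof (induction "length w" arbitrary: w t rule: less_induct)
    case less
    have same_rhs: "tmul (V r) (A r) w = tmul (W r) (A r) w" if "r \<in> {0..T}" for r
      using less.hyps that assms(3)[OF that] by (simp add: tmul_split_last)
    show ?case
    proof (rule eq_if_same_derivative_on_interval[where f = "\<lambda>r. V r w" and g = "\<lambda>r. W r w"
          and D = "\<lambda>r. tmul (V r) (A r) w" and a = 0 and b = T])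
      fix r assume r: "r \<in> {0..T}"
      show "((\<lambda>r. V r w) has_real_derivative tmul (V r) (A r) w) (at r within {0..T})"
        using solves_tensor_ode_derivative[OF assms(1) r] .
      show "((\<lambda>r. W r w) has_real_derivative tmul (V r) (A r) w) (at r within {0..T})"
        using solves_tensor_ode_derivative[OF assms(2) r, of w] same_rhs[OF r] by simp
    qed (use assms less.prems in \<open>simp_all add: solves_tensor_ode_def\<close>)
  qed
qed

(* Integrates dW = W \<otimes> A word by word; the term W w * A [] is left out, as A t [] = 0 in
   the equations considered. *)
function ode_coeff :: "(real \<Rightarrow> 'd tensor) \<Rightarrow> 'd list \<Rightarrow> real \<Rightarrow> real" where
  "ode_coeff A w t = (if w = [] then 1
     else integral {0..t} (\<lambda>r. \<Sum>i<length w. ode_coeff A (take i w) r * A r (drop i w)))"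
  by auto
termination
  by (relation "Wellfounded.measure (\<lambda>(A, w, t). length w)") auto

declare ode_coeff.simps [simp del]

lemma has_real_derivative_ode_coeff:
  assumes "\<And>u. continuous_on {0..T} (\<lambda>t. A t u)" "t \<in> {0..T}"
  shows "(ode_coeff A w has_real_derivative (\<Sum>i<length w. ode_coeff A (take i w) t * A t (drop i w)))
           (at t within {0..T})"
  using assms(2)
proof (induction "length w" arbitrary: w t rule: less_induct)
  case less
  show ?case
  proof (cases "w = []")
    case True
    then have "ode_coeff A w = (\<lambda>_. 1)"
      by (simp add: fun_eq_iff ode_coeff.simps)
    with True show ?thesis
      by simp
  next
    case False
    define f where "f = (\<lambda>r. \<Sum>i<length w. ode_coeff A (take i w) r * A r (drop i w))"
    have "continuous_on {0..T} (ode_coeff A (take i w))" if "i < length w" for i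
      using less.hyps[of "take i w"] that False
      by (intro continuous_on_eq_continuous_within[THEN iffD2] ballI DERIV_continuous) auto
    then have "continuous_on {0..T} f"
      unfolding f_def by (intro continuous_intros assms(1)) auto
    moreover have "ode_coeff A w = (\<lambda>t. integral {0..t} f)"
      using False by (subst ode_coeff.simps[abs_def]) (simp add: f_def)
    ultimately show ?thesis
      using integral_has_vector_derivative[of 0 T f t] less.prems
      by (simp add: has_real_derivative_iff_has_vector_derivative f_def)
  qed
qed

lemma solves_tensor_ode_exists:
  assumes "\<And>u. continuous_on {0..T} (\<lambda>t. A t u)" "\<And>t. t \<in> {0..T} \<Longrightarrow> A t [] = 0"
  shows "solves_tensor_ode T A (\<lambda>t w. ode_coeff A w t)"
  unfolding solves_tensor_ode_def
proof (intro conjI ballI allI)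
  show "(\<lambda>w. ode_coeff A w 0) = tone"
    by (rule ext, subst ode_coeff.simps) (auto simp: tone_def wrd_def)
  fix t w assume "t \<in> {0..T}"
  then show "((\<lambda>r. ode_coeff A w r) has_real_derivative tmul (\<lambda>w. ode_coeff A w t) (A t) w)
               (at t within {0..T})"
    using has_real_derivative_ode_coeff[OF assms(1)] assms(2) by (simp add: tmul_split_last)
qed

lemma solves_tensor_ode_extend:
  assumes "solves_tensor_ode T A W"
  shows "solves_tensor_ode T A (\<lambda>r. if r \<in> {0..T} then W r else tone)"
  unfolding solves_tensor_ode_def
proof (intro conjI ballI allI)
  show "(if 0 \<in> {0..T} then W 0 else tone) = tone"
    using assms by (simp add: solves_tensor_ode_def)
  fix t w assume t: "t \<in> {0..T}"
  show "((\<lambda>r. (if r \<in> {0..T} then W r else tone) w) has_real_derivative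
          tmul (if t \<in> {0..T} then W t else tone) (A t) w) (at t within {0..T})"
    unfolding if_P[OF t] using solves_tensor_ode_derivative[OF assms t]
    by (rule has_field_derivative_transform_within[where d = 1]) (use t in auto)
qed

lemma the_tensor_ode_solution:
  assumes "solves_tensor_ode T A W" "\<And>t. t \<in> {0..T} \<Longrightarrow> A t [] = 0"
  shows "(THE Z. Z 0 = tone \<and> (\<forall>r. r \<notin> {0..T} \<longrightarrow> Z r = tone) \<and> (\<forall>t\<in>{0..T}. \<forall>w.
            ((\<lambda>r. Z r w) has_real_derivative tmul (Z t) (A t) w) (at t within {0..T})))
         = (\<lambda>r. if r \<in> {0..T} then W r else tone)" (is "(THE Z. ?P Z) = ?V")
proof (rule the_equality)
  show "?P ?V"
    using solves_tensor_ode_extend[OF assms(1)] by (simp add: solves_tensor_ode_def)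
  fix Z assume Z: "?P Z"
  then have "solves_tensor_ode T A Z"
    by (simp add: solves_tensor_ode_def)
  then have "Z r = ?V r" if "r \<in> {0..T}" for r
    using solves_tensor_ode_unique[OF _ solves_tensor_ode_extend[OF assms(1)] assms(2) that] by blast
  with Z show "Z = ?V"
    by force
qed

lemma chen_solves_tensor_ode:
  assumes chen: "\<forall>s\<in>{0..T}. \<forall>u\<in>{0..T}. \<forall>t\<in>{0..T}. Z s t = tmul (Z s u) (Z u t)"
    and "Z 0 0 = tone" "0 \<le> T"
    and deriv: "\<And>t w. t \<in> {0..T} \<Longrightarrow> ((\<lambda>r. Z t r w) has_real_derivative A t w) (at t within {0..T})"
  shows "solves_tensor_ode T A (Z 0)"
  unfolding solves_tensor_ode_def
proof (intro conjI ballI allI)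
  show "Z 0 0 = tone"
    by fact
  fix t w assume t: "t \<in> {0..T}"
  have "((\<lambda>r. tmul (Z 0 t) (Z t r) w) has_real_derivative tmul (Z 0 t) (A t) w) (at t within {0..T})"
    using deriv[OF t] by (rule has_real_derivative_tmul_const_left)
  then show "((\<lambda>r. Z 0 r w) has_real_derivative tmul (Z 0 t) (A t) w) (at t within {0..T})"
  proof (rule has_field_derivative_transform_within[where d = 1])
    fix r assume "r \<in> {0..T}"
    moreover have "0 \<in> {0..T}"
      using assms(3) by simp
    ultimately have "Z 0 r = tmul (Z 0 t) (Z t r)"
      using chen t by blast
    then show "tmul (Z 0 t) (Z t r) w = Z 0 r w"
      by simp
  qed (use t in auto)
qed

section \<open>The canonical sum\<close>

lemma csum_path_solves:
  assumes "sgrm T X" "sgrm T Y" "T > 0"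
  shows "solves_tensor_ode T (\<lambda>t. tadd (diagder T X t) (diagder T Y t)) (csum_path T X Y)"
proof -
  let ?A = "\<lambda>t. tadd (diagder T X t) (diagder T Y t)"
  have A_Nil: "?A t [] = 0" if "t \<in> {0..T}" for t
    using that assms by (simp add: tadd_def diagder_Nil)
  have "continuous_on {0..T} (\<lambda>t. ?A t u)" for u
    unfolding tadd_def using assms by (intro continuous_intros continuous_on_diagder)
  then have W: "solves_tensor_ode T ?A (\<lambda>t w. ode_coeff ?A w t)"
    using A_Nil by (rule solves_tensor_ode_exists)
  have "csum_path T X Y = (\<lambda>r. if r \<in> {0..T} then (\<lambda>w. ode_coeff ?A w r) else tone)"
    unfolding csum_path_def using W A_Nil by (rule the_tensor_ode_solution)
  with solves_tensor_ode_extend[OF W] show ?thesis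
    by simp
qed

lemma csum_path_Nil:
  assumes "sgrm T X" "sgrm T Y" "T > 0" "t \<in> {0..T}"
  shows "csum_path T X Y t [] = 1"
  using solves_tensor_ode_Nil[OF csum_path_solves[OF assms(1-3)] _ assms(4)] assms
  by (simp add: tadd_def diagder_Nil)

lemma chen_csum:
  assumes "sgrm T X" "sgrm T Y" "T > 0" "u \<in> {0..T}"
  shows "tmul (csum T X Y s u) (csum T X Y u t) = csum T X Y s t"
proof -
  let ?P = "csum_path T X Y"
  have "tmul (csum T X Y s u) (csum T X Y u t)
      = tmul (tinv (?P s)) (tmul (tmul (?P u) (tinv (?P u))) (?P t))"
    by (simp add: csum_def tmul_assoc)
  also have "\<dots> = csum T X Y s t"
    by (simp add: csum_def tinv_inverse(2)[of "?P u", OF csum_path_Nil[OF assms]])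
  finally show ?thesis .
qed

lemma csum_diag:
  "sgrm T X \<Longrightarrow> sgrm T Y \<Longrightarrow> T > 0 \<Longrightarrow> s \<in> {0..T} \<Longrightarrow> csum T X Y s s = tone"
  by (simp add: csum_def tinv_inverse(1) csum_path_Nil)

lemma csum_has_derivative_diag:
  assumes "sgrm T X" "sgrm T Y" "T > 0" "s \<in> {0..T}"
  shows "((\<lambda>t. csum T X Y s t w) has_real_derivative tadd (diagder T X s) (diagder T Y s) w)
           (at s within {0..T})"
proof -
  let ?P = "csum_path T X Y"
  have "((\<lambda>t. tmul (tinv (?P s)) (?P t) w) has_real_derivative
          tmul (tinv (?P s)) (tmul (?P s) (tadd (diagder T X s) (diagder T Y s))) w) (at s within {0..T})"
    using solves_tensor_ode_derivative[OF csum_path_solves[OF assms(1-3)] assms(4)]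
    by (rule has_real_derivative_tmul_const_left)
  then show ?thesis
    by (simp add: csum_def tmul_assoc[symmetric]
        tinv_inverse(1)[of "?P s", OF csum_path_Nil[OF assms]])
qed

lemma csum_expansion:
  assumes "sgrm T X" "sgrm T Y" "T > 0" "s \<in> {0..T}"
  shows "\<exists>R. (\<forall>t\<in>{0..T}. csum T X Y s t = tadd (tmul (X s t) (Y s t)) (R t)) \<and>
           (\<forall>p. tpoly p \<longrightarrow> (\<lambda>t. pair (R t) p) \<in> o[at s within {0..T}](\<lambda>t. \<bar>t - s\<bar>))"
proof (rule expansion_if_same_derivative[where D = "tadd (diagder T X s) (diagder T Y s)"])
  show "csum T X Y s s = tmul (X s s) (Y s s)"
    using assms by (simp add: csum_diag sgrm_diag)
qed (intro csum_has_derivative_diag has_real_derivative_tmul_sgrm assms)+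

lemma eq_csum_if_chen_diag_derivative:
  assumes "sgrm T X" "sgrm T Y" "T > 0"
    and chen: "\<forall>s\<in>{0..T}. \<forall>u\<in>{0..T}. \<forall>t\<in>{0..T}. Z s t = tmul (Z s u) (Z u t)"
    and diag: "\<And>t. t \<in> {0..T} \<Longrightarrow> Z t t = tone"
    and deriv: "\<And>t w. t \<in> {0..T} \<Longrightarrow>
      ((\<lambda>r. Z t r w) has_real_derivative tadd (diagder T X t) (diagder T Y t) w) (at t within {0..T})"
    and "s \<in> {0..T}" "t \<in> {0..T}"
  shows "Z s t = csum T X Y s t"
proof -
  let ?A = "\<lambda>t. tadd (diagder T X t) (diagder T Y t)"
  have zero: "0 \<in> {0..T}"
    using assms(3) by simp
  have "solves_tensor_ode T ?A (Z 0)"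
    using chen diag[OF zero] less_imp_le[OF assms(3)] deriv by (rule chen_solves_tensor_ode)
  moreover have "?A r [] = 0" if "r \<in> {0..T}" for r
    using that assms(1-3) by (simp add: tadd_def diagder_Nil)
  ultimately have path: "Z 0 r = csum_path T X Y r" if "r \<in> {0..T}" for r
    using solves_tensor_ode_unique csum_path_solves[OF assms(1-3)] that by blast
  have "Z s s = tmul (Z s 0) (Z 0 s)"
    using chen zero assms(7) by blast
  with diag[OF assms(7)] have left_inverse: "tmul (Z s 0) (Z 0 s) = tone"
    by simp
  have "tinv (Z 0 s) = Z s 0"
    using tinv_eq_left_inverse[OF _ left_inverse] path[OF assms(7)] csum_path_Nil[OF assms(1-3,7)]
    by simp
  moreover have "Z s t = tmul (Z s 0) (Z 0 t)"
    using chen zero assms(7,8) by blast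
  ultimately show ?thesis
    using path zero assms(7,8) by (simp add: csum_def)
qed

lemma eq_csum_if_chen_expansion:
  assumes "sgrm T X" "sgrm T Y" "T > 0"
    and grouplike: "\<forall>s\<in>{0..T}. \<forall>t\<in>{0..T}. grouplike (Z s t)"
    and chen: "\<forall>s\<in>{0..T}. \<forall>u\<in>{0..T}. \<forall>t\<in>{0..T}. Z s t = tmul (Z s u) (Z u t)"
    and expansion: "\<forall>s\<in>{0..T}. \<exists>R. (\<forall>t\<in>{0..T}. Z s t = tadd (tmul (X s t) (Y s t)) (R t)) \<and>
      (\<forall>p. tpoly p \<longrightarrow> (\<lambda>t. pair (R t) p) \<in> o[at s within {0..T}](\<lambda>t. \<bar>t - s\<bar>))"
    and "s \<in> {0..T}" "t \<in> {0..T}"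
  shows "Z s t = csum T X Y s t"
proof (rule eq_csum_if_chen_diag_derivative[OF assms(1-3) chen _ _ assms(7,8)])
  show diag: "Z t t = tone" if "t \<in> {0..T}" for t
  proof (rule tmul_idem_eq_tone)
    show "Z t t [] = 1"
      using grouplike_Nil grouplike that by blast
    have "Z t t = tmul (Z t t) (Z t t)"
      using chen that by blast
    then show "tmul (Z t t) (Z t t) = Z t t"
      by (rule sym)
  qed
  fix t w assume t: "t \<in> {0..T}"
  obtain R where R: "\<forall>r\<in>{0..T}. Z t r = tadd (tmul (X t r) (Y t r)) (R r)"
    and R_smallo: "\<forall>p. tpoly p \<longrightarrow> (\<lambda>r. pair (R r) p) \<in> o[at t within {0..T}](\<lambda>r. \<bar>r - t\<bar>)"
    using expansion t by blast
  show "((\<lambda>r. Z t r w) has_real_derivative tadd (diagder T X t) (diagder T Y t) w)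
          (at t within {0..T})"
  proof (rule has_derivative_if_expansion[OF R R_smallo t])
    show "Z t t = tmul (X t t) (Y t t)"
      using diag[OF t] t assms(1,2) by (simp add: sgrm_diag)
  qed (rule has_real_derivative_tmul_sgrm[OF assms(1-3) t])
qed

theorem proposition2p16:
  fixes T :: real and X Y Z :: "real \<Rightarrow> real \<Rightarrow> ('d::finite) tensor"
  assumes "T > 0" and "sgrm T X" and "sgrm T Y"
    and "\<forall>s\<in>{0..T}. \<forall>t\<in>{0..T}. grouplike (Z s t)"
  shows "((\<forall>s\<in>{0..T}. \<forall>t\<in>{0..T}. Z s t = csum T X Y s t) \<longleftrightarrow>
          ((\<forall>s\<in>{0..T}. \<forall>u\<in>{0..T}. \<forall>t\<in>{0..T}. Z s t = tmul (Z s u) (Z u t)) \<and>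
           (\<forall>s\<in>{0..T}. \<exists>R :: real \<Rightarrow> 'd tensor.
              (\<forall>t\<in>{0..T}. Z s t = tadd (tmul (X s t) (Y s t)) (R t)) \<and>
              (\<forall>p. tpoly p \<longrightarrow>
                 (\<lambda>t. pair (R t) p) \<in> o[at s within {0..T}](\<lambda>t. \<bar>t - s\<bar>)))))
       \<and> (\<forall>s\<in>{0..T}. \<exists>r r' :: real \<Rightarrow> 'd tensor.
            (\<forall>t\<in>{0..T}. tmul (X s t) (Y s t) = tadd (tmul (Y s t) (X s t)) (r t) \<and>
               tmul (X s t) (Y s t) = tadd (tsub (tadd (X s t) (Y s t)) tone) (r' t)) \<and>
            (\<forall>p. tpoly p \<longrightarrow>
               (\<lambda>t. pair (r t) p) \<in> o[at s within {0..T}](\<lambda>t. \<bar>t - s\<bar>) \<and>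
               (\<lambda>t. pair (r' t) p) \<in> o[at s within {0..T}](\<lambda>t. \<bar>t - s\<bar>)))"
  apply (intro conjI iffI)
  subgoal
    using chen_csum[OF assms(2,3,1)] by simp
  subgoal
    using csum_expansion[OF assms(2,3,1)] by simp
  subgoal
    using eq_csum_if_chen_expansion[OF assms(2,3,1,4)] by blast
  subgoal
    by (intro ballI tmul_sgrm_expansions[OF assms(2,3,1)])
  done

end
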